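(* Let $l>0$, $D>0$, and let $r\in C^2([0,\infty))$ satisfy $r>0$, $r'<0$ on $[0,\infty)$ and $\lim_{v\to\infty}r(v)=0$. For $j\ge0$ put $\lambda_j=(\pi j/l)^2$ and $\sigma_j=-\big[\frac{r'(1)}{1+D\lambda_j}+r(1)\big]\lambda_j$; assume there is an integer $i^c\ge1$ with $\sigma_i>0$ for $1\le i\le i^c$ and $\sigma_i\le0$ for $i>i^c$, and let $\sigma_c=\frac1D(\sqrt{-r'(1)}-\sqrt{r(1)})^2$. For $\sigma\in(0,\sigma_c)$ set $$f_0(\sigma)=-\frac{r'(1)}{Dr(1)}-\frac{\sigma}{r(1)}\ (>0),\qquad f_1=\frac{r'(1)}{Dr(1)},\qquad g_0=\frac1D,\qquad g_1=-\frac1D,$$ let $X=\{(u,v):u,v\in C^2([0,l]),\ u'=v'=0\text{ at }x=0,l\}$, let $F_\sigma$ be the inverse of $f_0(\sigma)-\frac{d^2}{dx^2}$ and $F$ the inverse of $-g_1-\frac{d^2}{dx^2}$ (both with homogeneous Neumann boundary conditions on $(0,l)$), and define the linear operator $M(\sigma)$ on $X$ by $$M(\sigma)(\tilde u,\tilde v)=\big(2f_0(\sigma)F_\sigma(\tilde u)+f_1F_\sigma(\tilde v),\ g_0F(\tilde u)\big).$$ Let $j$ be a positive integer with $\lambda_j<-\frac{r'(1)+r(1)}{Dr(1)}$ and $\sigma_j\ne\sigma_k$ for all integers $k\ne j$, and assume $\sigma_j\in(0,\sigma_c)$. Then $1$ is an eigenvalue of $M(\sigma_j)$ with algebraic multiplicity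 one.
   Context: $M(\sigma)$ is the linear part of the fixed-point reformulation $\tilde\omega=M(\sigma)\tilde\omega+H(\sigma,\tilde\omega)$ of the Neumann steady-state problem $(r(v)u)''+\sigma u(1-u)=0$, $Dv''-v+u=0$ on $(0,l)$ after shifting $(u,v)=(1+\tilde u,1+\tilde v)$. *)

theory Defs
  imports "HOL-Analysis.Analysis"
begin

text \<open>Elements of X are pairs of real functions; we use the convention that they
vanish outside [0,l] (functions on [0,l] extended by 0), so that X is a genuine
function space on [0,l].\<close>

type_synonym pairfun = "(real \<Rightarrow> real) \<times> (real \<Rightarrow> real)"

definition pzero :: pairfun where
  "pzero = (\<lambda>x. 0, \<lambda>x. 0)"

definition psub :: "pairfun \<Rightarrow> pairfun \<Rightarrow> pairfun" where
  "psub w w' = (\<lambda>x. fst w x - fst w' x, \<lambda>x. snd w x - snd w' x)"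

definition pscale :: "real \<Rightarrow> pairfun \<Rightarrow> pairfun" where
  "pscale c w = (\<lambda>x. c * fst w x, \<lambda>x. c * snd w x)"

definition neumann_C2 :: "real \<Rightarrow> (real \<Rightarrow> real) \<Rightarrow> bool" where
  "neumann_C2 l u \<longleftrightarrow>
     (\<forall>x. x \<notin> {0..l} \<longrightarrow> u x = 0) \<and>
     (\<exists>u1 u2. (\<forall>x\<in>{0..l}. (u has_real_derivative u1 x) (at x within {0..l}) \<and>
                            (u1 has_real_derivative u2 x) (at x within {0..l})) \<and>
              continuous_on {0..l} u2 \<and> u1 0 = 0 \<and> u1 l = 0)"

definition neumann_sol :: "real \<Rightarrow> real \<Rightarrow> (real \<Rightarrow> real) \<Rightarrow> (real \<Rightarrow> real) \<Rightarrow> bool" where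
  "neumann_sol l a w u \<longleftrightarrow>
     (\<forall>x. x \<notin> {0..l} \<longrightarrow> u x = 0) \<and>
     (\<exists>u1 u2. (\<forall>x\<in>{0..l}. (u has_real_derivative u1 x) (at x within {0..l}) \<and>
                            (u1 has_real_derivative u2 x) (at x within {0..l})) \<and>
              continuous_on {0..l} u2 \<and> u1 0 = 0 \<and> u1 l = 0 \<and>
              (\<forall>x\<in>{0..l}. a * u x - u2 x = w x))"

definition neumann_inv :: "real \<Rightarrow> real \<Rightarrow> (real \<Rightarrow> real) \<Rightarrow> (real \<Rightarrow> real)" where
  "neumann_inv l a w = (THE u. neumann_sol l a w u)"

definition Xspace :: "real \<Rightarrow> pairfun set" where
  "Xspace l = {w. neumann_C2 l (fst w) \<and> neumann_C2 l (snd w)}"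

definition lam :: "real \<Rightarrow> nat \<Rightarrow> real" where
  "lam l j = (pi * real j / l)^2"

definition sig :: "(real \<Rightarrow> real) \<Rightarrow> (real \<Rightarrow> real) \<Rightarrow> real \<Rightarrow> real \<Rightarrow> nat \<Rightarrow> real" where
  "sig r r' D l j = - (r' 1 / (1 + D * lam l j) + r 1) * lam l j"

definition sig_c :: "(real \<Rightarrow> real) \<Rightarrow> (real \<Rightarrow> real) \<Rightarrow> real \<Rightarrow> real" where
  "sig_c r r' D = (1 / D) * (sqrt (- r' 1) - sqrt (r 1))^2"

definition f0 :: "(real \<Rightarrow> real) \<Rightarrow> (real \<Rightarrow> real) \<Rightarrow> real \<Rightarrow> real \<Rightarrow> real" where
  "f0 r r' D \<sigma> = - r' 1 / (D * r 1) - \<sigma> / r 1"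

definition f1 :: "(real \<Rightarrow> real) \<Rightarrow> (real \<Rightarrow> real) \<Rightarrow> real \<Rightarrow> real" where
  "f1 r r' D = r' 1 / (D * r 1)"

definition g0 :: "real \<Rightarrow> real" where "g0 D = 1 / D"
definition g1 :: "real \<Rightarrow> real" where "g1 D = - 1 / D"

definition Mop :: "(real \<Rightarrow> real) \<Rightarrow> (real \<Rightarrow> real) \<Rightarrow> real \<Rightarrow> real \<Rightarrow> real \<Rightarrow> pairfun \<Rightarrow> pairfun" where
  "Mop r r' D l \<sigma> w =
     (let F\<sigma> = neumann_inv l (f0 r r' D \<sigma>); F = neumann_inv l (- g1 D) in
      (\<lambda>x. 2 * f0 r r' D \<sigma> * F\<sigma> (fst w) x + f1 r r' D * F\<sigma> (snd w) x,
       \<lambda>x. g0 D * F (fst w) x))"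

definition gen_eigenspace :: "pairfun set \<Rightarrow> (pairfun \<Rightarrow> pairfun) \<Rightarrow> real \<Rightarrow> pairfun set" where
  "gen_eigenspace X T \<mu> = {w \<in> X. \<exists>k. ((\<lambda>z. psub (pscale \<mu> z) (T z)) ^^ k) w = pzero}"

definition eigenvalue_alg_mult_one :: "pairfun set \<Rightarrow> (pairfun \<Rightarrow> pairfun) \<Rightarrow> real \<Rightarrow> bool" where
  "eigenvalue_alg_mult_one X T \<mu> \<longleftrightarrow>
     (\<exists>w\<in>X. w \<noteq> pzero \<and> T w = pscale \<mu> w) \<and>
     (\<exists>w0. w0 \<noteq> pzero \<and> gen_eigenspace X T \<mu> = range (\<lambda>c. pscale c w0))"

end

(*
  Expanding in the Neumann eigenfunctions cos (k pi x / l), both resolvents in M(sigma) act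
  diagonally, so on the k-th cosine mode M(sigma) is a 2x2 matrix A_k; completeness of the
  cosine system (Stone-Weierstrass) makes this decomposition faithful.  The determinant of
  I - A_k is a positive multiple of sigma - sigma_k, so 1 is an eigenvalue of A_k exactly for
  k = j, with eigenvector (cos, cos / (1 + D lam_j)).  Its trace is proportional to lam_j > 0,
  so 1 is a simple root of the characteristic polynomial of A_j and no Jordan chain exists.
*)
theory Submission
  imports Defs "HOL-Analysis.Analysis"
begin

section \<open>The Neumann problem a u - u'' = w on [0, l]\<close>

definition neumann_derivs ::
  "real \<Rightarrow> (real \<Rightarrow> real) \<Rightarrow> (real \<Rightarrow> real) \<Rightarrow> (real \<Rightarrow> real) \<Rightarrow> bool" where
  "neumann_derivs l u u1 u2 \<longleftrightarrow>
     (\<forall>x\<in>{0..l}. (u has_real_derivative u1 x) (at x within {0..l}) \<and>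
                 (u1 has_real_derivative u2 x) (at x within {0..l})) \<and>
     continuous_on {0..l} u2 \<and> u1 0 = 0 \<and> u1 l = 0"

lemma neumann_derivs_continuous:
  assumes "neumann_derivs l u u1 u2"
  shows "continuous_on {0..l} u" "continuous_on {0..l} u1" "continuous_on {0..l} u2"
  using assms unfolding neumann_derivs_def by (auto intro: DERIV_continuous_on)

lemma neumann_C2_iff:
  "neumann_C2 l u \<longleftrightarrow> (\<forall>x. x \<notin> {0..l} \<longrightarrow> u x = 0) \<and> (\<exists>u1 u2. neumann_derivs l u u1 u2)"
  unfolding neumann_C2_def neumann_derivs_def by blast

lemma neumann_sol_iff:
  "neumann_sol l a w u \<longleftrightarrow> (\<forall>x. x \<notin> {0..l} \<longrightarrow> u x = 0) \<and>
     (\<exists>u1 u2. neumann_derivs l u u1 u2 \<and> (\<forall>x\<in>{0..l}. a * u x - u2 x = w x))"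
  unfolding neumann_sol_def neumann_derivs_def by blast

lemma neumann_sol_imp_neumann_C2: "neumann_sol l a w u \<Longrightarrow> neumann_C2 l u"
  unfolding neumann_sol_def neumann_C2_def by blast

lemma neumann_C2_continuous: "neumann_C2 l u \<Longrightarrow> continuous_on {0..l} u"
  using neumann_derivs_continuous neumann_C2_iff by blast

lemma neumann_C2_lincomb:
  assumes "neumann_C2 l u" "neumann_C2 l v"
  shows "neumann_C2 l (\<lambda>x. a * u x + b * v x)"
proof -
  obtain u1 u2 v1 v2 where U: "neumann_derivs l u u1 u2" "\<forall>x. x \<notin> {0..l} \<longrightarrow> u x = 0"
    and V: "neumann_derivs l v v1 v2" "\<forall>x. x \<notin> {0..l} \<longrightarrow> v x = 0"
    using assms unfolding neumann_C2_iff by blast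
  have "neumann_derivs l (\<lambda>x. a * u x + b * v x)
          (\<lambda>x. a * u1 x + b * v1 x) (\<lambda>x. a * u2 x + b * v2 x)"
    using U(1) V(1) unfolding neumann_derivs_def
    by (auto intro!: derivative_eq_intros continuous_intros)
  then show ?thesis unfolding neumann_C2_iff using U(2) V(2) by auto
qed

lemma neumann_C2_scale: "neumann_C2 l u \<Longrightarrow> neumann_C2 l (\<lambda>x. t * u x)"
  using neumann_C2_lincomb[of l u u t 0] by simp

lemma neumann_homogeneous_eq_0:
  assumes a: "a > 0" and l: "l > 0" and d: "neumann_derivs l d d1 d2"
    and eq: "\<forall>x\<in>{0..l}. d2 x = a * d x" and x: "x \<in> {0..l}"
  shows "d x = 0"
proof -
  define e where "e x = d1 x ^ 2 + a * d x ^ 2" for x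
  \<comment> \<open>Energy identity: (d d')' = d'^2 + a d^2, and d d' vanishes at both ends.\<close>
  have der: "((\<lambda>x. d x * d1 x) has_vector_derivative e x) (at x within {0..l})"
    if x: "x \<in> {0..l}" for x
  proof -
    have "(d has_real_derivative d1 x) (at x within {0..l})"
      "(d1 has_real_derivative d2 x) (at x within {0..l})"
      using d x unfolding neumann_derivs_def by auto
    then have "((\<lambda>x. d x * d1 x) has_real_derivative (d1 x * d1 x + d x * d2 x)) (at x within {0..l})"
      by (auto intro!: derivative_eq_intros)
    moreover have "d1 x * d1 x + d x * d2 x = e x"
      using eq x by (simp add: e_def power2_eq_square)
    ultimately show ?thesis
      by (simp add: has_real_derivative_iff_has_vector_derivative)
  qed
  have "(e has_integral (d l * d1 l - d 0 * d1 0)) {0..l}"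
    using fundamental_theorem_of_calculus[OF _ der] l by auto
  then have e_int: "(e has_integral 0) {0..l}"
    using d unfolding neumann_derivs_def by simp
  have e_cont: "continuous_on {0..l} e"
    unfolding e_def using neumann_derivs_continuous[OF d] by (intro continuous_intros)
  have "e x = 0"
    using has_integral_0_cbox_imp_0[of 0 l e x] e_cont e_int x a l
    by (auto simp: cbox_interval e_def)
  moreover have "0 \<le> d1 x ^ 2" "0 \<le> a * d x ^ 2" using a by auto
  ultimately have "a * d x ^ 2 = 0" unfolding e_def by linarith
  then show ?thesis using a by simp
qed

lemma neumann_sol_unique:
  assumes a: "a > 0" and l: "l > 0" and su: "neumann_sol l a w u" and sv: "neumann_sol l a w v"
  shows "u = v"
proof
  fix x
  obtain u1 u2 where U: "neumann_derivs l u u1 u2" "\<forall>x\<in>{0..l}. a * u x - u2 x = w x"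
      "\<forall>x. x \<notin> {0..l} \<longrightarrow> u x = 0"
    using su unfolding neumann_sol_iff by blast
  obtain v1 v2 where V: "neumann_derivs l v v1 v2" "\<forall>x\<in>{0..l}. a * v x - v2 x = w x"
      "\<forall>x. x \<notin> {0..l} \<longrightarrow> v x = 0"
    using sv unfolding neumann_sol_iff by blast
  have "neumann_derivs l (\<lambda>x. u x - v x) (\<lambda>x. u1 x - v1 x) (\<lambda>x. u2 x - v2 x)"
    using U(1) V(1) unfolding neumann_derivs_def
    by (auto intro!: derivative_eq_intros continuous_intros)
  moreover have "\<forall>x\<in>{0..l}. u2 x - v2 x = a * (u x - v x)"
    using U(2) V(2) by (auto simp: algebra_simps)
  ultimately have "x \<in> {0..l} \<Longrightarrow> u x - v x = 0"
    by (rule neumann_homogeneous_eq_0[OF a l])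
  then show "u x = v x" using U(3) V(3) by force
qed

lemma neumann_ode_solution:
  assumes a: "a > 0" and l: "l > 0" and w: "continuous_on {0..l} w"
  obtains U U1 where
    "\<And>x. x \<in> {0..l} \<Longrightarrow> (U has_real_derivative U1 x) (at x within {0..l})"
    "\<And>x. x \<in> {0..l} \<Longrightarrow> (U1 has_real_derivative a * U x - w x) (at x within {0..l})"
    "U1 0 = 0" "U1 l = 0"
proof -
  define k where "k = sqrt a"
  have k: "k > 0" "k^2 = a" using a unfolding k_def by auto
  have dcosh: "((\<lambda>x. cosh (k * x)) has_real_derivative sinh (k * x) * k) (at x within S)" for x S
    using has_field_derivative_cosh[of "\<lambda>x. k * x" k x S] by (simp add: DERIV_cmult_right)
  have dsinh: "((\<lambda>x. sinh (k * x)) has_real_derivative cosh (k * x) * k) (at x within S)" for x S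
    using has_field_derivative_sinh[of "\<lambda>x. k * x" k x S] by (simp add: DERIV_cmult_right)
  \<comment> \<open>Variation of constants with the fundamental system cosh (k x), sinh (k x); the constant A
      is chosen so that U'(l) = 0.\<close>
  define C where "C x = integral {0..x} (\<lambda>t. cosh (k * t) * w t)" for x
  define S where "S x = integral {0..x} (\<lambda>t. sinh (k * t) * w t)" for x
  define A where "A = (cosh (k * l) * C l - sinh (k * l) * S l) / (k * sinh (k * l))"
  define U where "U x = A * cosh (k * x) + 1 / k * (cosh (k * x) * S x - sinh (k * x) * C x)" for x
  define U1 where "U1 x = A * k * sinh (k * x) + sinh (k * x) * S x - cosh (k * x) * C x" for x
  have dC: "(C has_real_derivative cosh (k * x) * w x) (at x within {0..l})" if "x \<in> {0..l}" for x
    unfolding C_def has_real_derivative_iff_has_vector_derivative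
    by (rule integral_has_vector_derivative[OF _ that]) (intro continuous_intros w)
  have dS: "(S has_real_derivative sinh (k * x) * w x) (at x within {0..l})" if "x \<in> {0..l}" for x
    unfolding S_def has_real_derivative_iff_has_vector_derivative
    by (rule integral_has_vector_derivative[OF _ that]) (intro continuous_intros w)
  have dU: "(U has_real_derivative U1 x) (at x within {0..l})" if "x \<in> {0..l}" for x
    unfolding U_def U1_def using k(1)
    by (auto intro!: derivative_eq_intros dC[OF that] dS[OF that] dcosh dsinh simp: field_simps)
  have dU1: "(U1 has_real_derivative (a * U x - w x)) (at x within {0..l})" if "x \<in> {0..l}" for x
  proof -
    have h: "cosh (k * x) * cosh (k * x) = sinh (k * x) * sinh (k * x) + 1"
      using cosh_square_eq[of "k * x"] by (simp add: power2_eq_square)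
    show ?thesis
      unfolding U1_def U_def k(2)[symmetric] using k(1)
      by (auto intro!: derivative_eq_intros dC[OF that] dS[OF that] dcosh dsinh
          simp: field_simps power2_eq_square h)
  qed
  have "U1 0 = 0" unfolding U1_def C_def S_def by simp
  moreover have "sinh (k * l) \<noteq> 0" using k l by simp
  then have "U1 l = 0" using k unfolding U1_def A_def by (simp add: field_simps)
  ultimately show ?thesis using that dU dU1 by blast
qed

lemma neumann_sol_exists:
  assumes a: "a > 0" and l: "l > 0" and w: "continuous_on {0..l} w"
  shows "\<exists>u. neumann_sol l a w u"
proof -
  obtain U U1 where dU: "\<And>x. x \<in> {0..l} \<Longrightarrow> (U has_real_derivative U1 x) (at x within {0..l})"
    and dU1: "\<And>x. x \<in> {0..l} \<Longrightarrow> (U1 has_real_derivative a * U x - w x) (at x within {0..l})"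
    and bc: "U1 0 = 0" "U1 l = 0"
    using neumann_ode_solution[OF assms] by blast
  define u where "u x = (if x \<in> {0..l} then U x else 0)" for x
  have "neumann_derivs l u U1 (\<lambda>x. a * U x - w x)"
    unfolding neumann_derivs_def
  proof (intro conjI ballI bc)
    fix x assume x: "x \<in> {0..l}"
    show "(u has_real_derivative U1 x) (at x within {0..l})"
      by (rule has_field_derivative_transform_within[OF dU[OF x] zero_less_one x]) (simp add: u_def)
    show "(U1 has_real_derivative a * U x - w x) (at x within {0..l})" by (rule dU1[OF x])
  next
    show "continuous_on {0..l} (\<lambda>x. a * U x - w x)"
      using DERIV_continuous_on[OF dU] by (intro continuous_intros w)
  qed
  moreover have "\<forall>x\<in>{0..l}. a * u x - (a * U x - w x) = w x"
    by (simp add: u_def)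
  moreover have "\<forall>x. x \<notin> {0..l} \<longrightarrow> u x = 0"
    by (simp add: u_def)
  ultimately have "neumann_sol l a w u"
    unfolding neumann_sol_iff by blast
  then show ?thesis by blast
qed

lemma neumann_inv_sol:
  assumes "a > 0" "l > 0" "continuous_on {0..l} w"
  shows "neumann_sol l a w (neumann_inv l a w)"
proof -
  have "\<exists>!u. neumann_sol l a w u"
    using neumann_sol_exists[OF assms] neumann_sol_unique[OF assms(1,2)] by blast
  then show ?thesis unfolding neumann_inv_def by (rule theI')
qed

lemma neumann_inv_eq:
  assumes "a > 0" "l > 0" "neumann_sol l a w u"
  shows "neumann_inv l a w = u"
  unfolding neumann_inv_def
  using assms neumann_sol_unique[OF assms(1,2)] by (intro the_equality) auto

lemma neumann_inv_C2:
  assumes "a > 0" "l > 0" "neumann_C2 l w"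
  shows "neumann_C2 l (neumann_inv l a w)"
  using neumann_inv_sol[OF assms(1,2) neumann_C2_continuous[OF assms(3)]]
  by (rule neumann_sol_imp_neumann_C2)

section \<open>Cosine coefficients\<close>

definition cos_coeff :: "real \<Rightarrow> (real \<Rightarrow> real) \<Rightarrow> nat \<Rightarrow> real" where
  "cos_coeff l h k = integral {0..l} (\<lambda>x. h x * cos (real k * pi * x / l))"

lemma continuous_on_cos_mode_arg: "continuous_on S (\<lambda>x. cos (real k * pi * x / l))"
proof -
  have "continuous_on S (\<lambda>x. cos ((real k * pi / l) * x))" by (intro continuous_intros)
  then show ?thesis by simp
qed

lemma cos_coeff_lincomb:
  assumes "continuous_on {0..l} u" "continuous_on {0..l} v"
  shows "cos_coeff l (\<lambda>x. a * u x + b * v x) k = a * cos_coeff l u k + b * cos_coeff l v k"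
proof -
  have "(\<lambda>x. a * (u x * cos (real k * pi * x / l))) integrable_on {0..l}"
       "(\<lambda>x. b * (v x * cos (real k * pi * x / l))) integrable_on {0..l}"
    by (intro integrable_continuous_interval continuous_intros assms continuous_on_cos_mode_arg)+
  from integral_add[OF this] show ?thesis unfolding cos_coeff_def by (simp add: algebra_simps)
qed

lemma cos_coeff_cong: "(\<And>x. x \<in> {0..l} \<Longrightarrow> u x = v x) \<Longrightarrow> cos_coeff l u k = cos_coeff l v k"
  unfolding cos_coeff_def by (rule integral_cong) simp

lemma lam_eq: "lam l k = (real k * pi / l)^2"
  unfolding lam_def by (simp add: mult.commute)

lemma lam_nonneg: "lam l k \<ge> 0"
  unfolding lam_def by simp

lemma lam_pos: "l > 0 \<Longrightarrow> k \<ge> 1 \<Longrightarrow> lam l k > 0"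
  unfolding lam_def by simp

lemma lam_inj: "l > 0 \<Longrightarrow> lam l j = lam l k \<Longrightarrow> j = k"
  unfolding lam_def by (simp add: power2_eq_iff_nonneg)

lemma cos_coeff_second_deriv:
  assumes u: "neumann_derivs l u u1 u2" and l: "l > 0"
  shows "cos_coeff l u2 k = - lam l k * cos_coeff l u k"
proof -
  define m where "m = real k * pi / l"
  have mx: "real k * pi * x / l = m * x" for x unfolding m_def by simp
  define \<Phi> where "\<Phi> x = u1 x * cos (m * x) + m * u x * sin (m * x)" for x
  have cu: "continuous_on {0..l} u" "continuous_on {0..l} u2"
    using neumann_derivs_continuous[OF u] by auto
  have der: "(\<Phi> has_vector_derivative (u2 x * cos (m * x) + m^2 * (u x * cos (m * x))))
               (at x within {0..l})" if x: "x \<in> {0..l}" for x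
  proof -
    have "(u has_real_derivative u1 x) (at x within {0..l})"
         "(u1 has_real_derivative u2 x) (at x within {0..l})"
      using u x unfolding neumann_derivs_def by auto
    then have "(\<Phi> has_real_derivative (u2 x * cos (m * x) + m^2 * (u x * cos (m * x))))
                 (at x within {0..l})"
      unfolding \<Phi>_def
      by (auto intro!: derivative_eq_intros simp: power2_eq_square algebra_simps)
    then show ?thesis by (simp add: has_real_derivative_iff_has_vector_derivative)
  qed
  have "((\<lambda>x. u2 x * cos (m * x) + m^2 * (u x * cos (m * x))) has_integral (\<Phi> l - \<Phi> 0)) {0..l}"
    using fundamental_theorem_of_calculus[OF _ der] l by auto
  moreover have "\<Phi> l = 0" "\<Phi> 0 = 0"
    using u l unfolding \<Phi>_def neumann_derivs_def m_def by (auto simp: sin_npi)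
  ultimately have sum0: "integral {0..l} (\<lambda>x. u2 x * cos (m * x) + m^2 * (u x * cos (m * x))) = 0"
    by (simp add: integral_unique)
  have "(\<lambda>x. u2 x * cos (m * x)) integrable_on {0..l}"
       "(\<lambda>x. m^2 * (u x * cos (m * x))) integrable_on {0..l}"
    by (intro integrable_continuous_interval continuous_intros cu)+
  from integral_add[OF this] sum0
  have "integral {0..l} (\<lambda>x. u2 x * cos (m * x)) + m^2 * integral {0..l} (\<lambda>x. u x * cos (m * x)) = 0"
    by simp
  then show ?thesis unfolding cos_coeff_def mx lam_eq m_def[symmetric] by simp
qed

lemma cos_coeff_neumann_sol:
  assumes "neumann_sol l a w u" "l > 0"
  shows "(a + lam l k) * cos_coeff l u k = cos_coeff l w k"
proof -
  obtain u1 u2 where u: "neumann_derivs l u u1 u2" "\<forall>x\<in>{0..l}. a * u x - u2 x = w x"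
    using assms(1) unfolding neumann_sol_iff by blast
  have cont: "continuous_on {0..l} u" "continuous_on {0..l} u2"
    using neumann_derivs_continuous[OF u(1)] by auto
  have "cos_coeff l w k = cos_coeff l (\<lambda>x. a * u x + (-1) * u2 x) k"
    by (rule cos_coeff_cong) (use u(2) in auto)
  also have "\<dots> = a * cos_coeff l u k + (-1) * cos_coeff l u2 k"
    by (rule cos_coeff_lincomb[OF cont])
  also have "\<dots> = a * cos_coeff l u k + lam l k * cos_coeff l u k"
    by (simp add: cos_coeff_second_deriv[OF u(1) assms(2)])
  finally show ?thesis by (simp add: algebra_simps)
qed

lemma cos_power_Suc_times_cos_int:
  "cos t ^ Suc n * cos (real_of_int m * t) =
     (cos t ^ n * cos (real_of_int (m - 1) * t) + cos t ^ n * cos (real_of_int (m + 1) * t)) / 2"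
proof -
  have "cos t * cos (real_of_int m * t) =
        (cos (real_of_int (m - 1) * t) + cos (real_of_int (m + 1) * t)) / 2"
    using cos_times_cos[of "real_of_int m * t" t] by (simp add: algebra_simps)
  then have "cos t ^ Suc n * cos (real_of_int m * t) =
      cos t ^ n * ((cos (real_of_int (m - 1) * t) + cos (real_of_int (m + 1) * t)) / 2)"
    by (metis (no_types, lifting) mult.assoc mult.left_commute power_Suc)
  then show ?thesis by (simp add: distrib_left add_divide_distrib)
qed

lemma integral_mult_poly_cos_eq_0:
  fixes h :: "real \<Rightarrow> real"
  assumes h: "continuous_on {0..l} h" and orth: "\<And>k. cos_coeff l h k = 0"
  shows "integral {0..l} (\<lambda>x. h x * poly p (cos (pi * x / l))) = 0"
proof -
  define \<theta> where "\<theta> x = pi / l * x" for x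
  have \<theta>_cont: "continuous_on {0..l} \<theta>" unfolding \<theta>_def by (intro continuous_intros)
  have cos_int: "cos (real_of_int m * t) = cos (real (nat \<bar>m\<bar>) * t)" for m t
  proof (cases "m \<ge> 0")
    case False
    then have "real_of_int m * t = - (real (nat \<bar>m\<bar>) * t)" by simp
    then show ?thesis by (simp only: cos_minus)
  qed simp
  \<comment> \<open>Negative m are needed in the induction because of the shift m - 1.\<close>
  have powers: "integral {0..l} (\<lambda>x. h x * (cos (\<theta> x) ^ n * cos (real_of_int m * \<theta> x))) = 0" for n m
  proof (induction n arbitrary: m)
    case 0
    have "cos (real_of_int m * \<theta> x) = cos (real (nat \<bar>m\<bar>) * pi * x / l)" for x
      unfolding cos_int \<theta>_def by (simp add: mult.assoc)
    then show ?case using orth[of "nat \<bar>m\<bar>"] by (simp add: cos_coeff_def)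
  next
    case (Suc n)
    have split: "h x * (cos (\<theta> x) ^ Suc n * cos (real_of_int m * \<theta> x)) =
        (h x * (cos (\<theta> x) ^ n * cos (real_of_int (m - 1) * \<theta> x)) +
         h x * (cos (\<theta> x) ^ n * cos (real_of_int (m + 1) * \<theta> x))) / 2" for x
      unfolding cos_power_Suc_times_cos_int by (simp add: distrib_left)
    have "(\<lambda>x. h x * (cos (\<theta> x) ^ n * cos (real_of_int (m - 1) * \<theta> x))) integrable_on {0..l}"
         "(\<lambda>x. h x * (cos (\<theta> x) ^ n * cos (real_of_int (m + 1) * \<theta> x))) integrable_on {0..l}"
      by (intro integrable_continuous_interval continuous_intros h \<theta>_cont)+
    from integral_add[OF this] show ?case
      unfolding split using Suc.IH[of "m - 1"] Suc.IH[of "m + 1"] by simp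
  qed
  have "integral {0..l} (\<lambda>x. h x * poly p (cos (\<theta> x))) =
        integral {0..l} (\<lambda>x. \<Sum>i\<le>degree p. coeff p i * (h x * cos (\<theta> x) ^ i))"
    unfolding poly_altdef by (simp add: sum_distrib_left algebra_simps)
  also have "\<dots> = (\<Sum>i\<le>degree p. integral {0..l} (\<lambda>x. coeff p i * (h x * cos (\<theta> x) ^ i)))"
    by (rule integral_sum) (auto intro!: integrable_continuous_interval continuous_intros h \<theta>_cont)
  also have "\<dots> = 0"
    using powers[of _ 0] by simp
  finally show ?thesis by (simp add: \<theta>_def)
qed

lemma continuous_on_poly_comp: "continuous_on S f \<Longrightarrow> continuous_on S (\<lambda>x. poly p (f x :: real))"
  unfolding poly_altdef by (intro continuous_intros)

lemma function_ring_on_poly_cos: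
  assumes l: "l > 0"
  shows "function_ring_on {f. \<exists>p. f = (\<lambda>x. poly p (cos (pi * x / l)))} {0..l}"
    (is "function_ring_on ?R _")
proof
  show "compact {0..l}" by simp
next
  fix f assume "f \<in> ?R"
  then show "continuous_on {0..l} f"
    using l by (auto intro!: continuous_on_poly_comp continuous_intros)
next
  fix f g assume "f \<in> ?R" "g \<in> ?R"
  then obtain p q where "f = (\<lambda>x. poly p (cos (pi * x / l)))" "g = (\<lambda>x. poly q (cos (pi * x / l)))"
    by blast
  then show "(\<lambda>x. f x + g x) \<in> ?R" "(\<lambda>x. f x * g x) \<in> ?R"
    by (auto intro: exI[of _ "p + q"] exI[of _ "p * q"])
next
  fix c :: real
  show "(\<lambda>_. c) \<in> ?R" by (auto intro: exI[of _ "[:c:]"])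
next
  fix x y :: real assume xy: "x \<in> {0..l}" "y \<in> {0..l}" "x \<noteq> y"
  have range: "0 \<le> pi * x / l" "pi * x / l \<le> pi" "0 \<le> pi * y / l" "pi * y / l \<le> pi"
    using xy l by (auto simp: field_simps)
  have "cos (pi * x / l) \<noteq> cos (pi * y / l)"
  proof
    assume "cos (pi * x / l) = cos (pi * y / l)"
    with range have "pi * x / l = pi * y / l" by (rule cos_inj_pi)
    with xy(3) l show False by simp
  qed
  then show "\<exists>f\<in>?R. f x \<noteq> f y"
    by (intro bexI[of _ "\<lambda>x. poly [:0, 1:] (cos (pi * x / l))"] CollectI exI[of _ "[:0, 1:]"] refl) simp
qed

lemma orthogonal_poly_cos_imp_zero:
  fixes h :: "real \<Rightarrow> real"
  assumes l: "l > 0" and h: "continuous_on {0..l} h"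
    and orth: "\<And>p. integral {0..l} (\<lambda>x. h x * poly p (cos (pi * x / l))) = 0"
    and x: "x \<in> {0..l}"
  shows "h x = 0"
proof -
  interpret function_ring_on "{f. \<exists>p. f = (\<lambda>x. poly p (cos (pi * x / l)))}" "{0..l}"
    by (rule function_ring_on_poly_cos[OF l])
  obtain B where B: "0 \<le> B" "\<And>x. x \<in> {0..l} \<Longrightarrow> \<bar>h x\<bar> \<le> B"
    using continuous_on_compact_bound[OF compact_Icc h] by auto
  have hh: "(\<lambda>x. h x * h x) integrable_on {0..l}"
    by (intro integrable_continuous_interval continuous_intros h)
  \<comment> \<open>h is orthogonal to its uniform approximants, hence to itself.\<close>
  have "\<bar>integral {0..l} (\<lambda>x. h x * h x)\<bar> \<le> e" if e: "e > 0" for e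
  proof -
    define \<delta> where "\<delta> = e / (l * (B + 1))"
    have \<delta>: "\<delta> > 0" using e l B unfolding \<delta>_def by auto
    obtain p where p: "\<forall>x\<in>{0..l}. \<bar>h x - poly p (cos (pi * x / l))\<bar> < \<delta>"
      using Stone_Weierstrass_basic[OF h \<delta>] by blast
    have "(\<lambda>x. h x * poly p (cos (pi * x / l))) integrable_on {0..l}"
      using l by (auto intro!: integrable_continuous_interval continuous_intros h continuous_on_poly_comp)
    from integral_diff[OF hh this] orth[of p]
    have "integral {0..l} (\<lambda>x. h x * h x) =
          integral {0..l} (\<lambda>x. h x * (h x - poly p (cos (pi * x / l))))"
      by (simp add: algebra_simps)
    also have "\<bar>\<dots>\<bar> \<le> integral {0..l} (\<lambda>x. (B + 1) * \<delta>)"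
    proof (rule integral_norm_bound_integral[where f = "\<lambda>x. h x * (h x - poly p (cos (pi * x / l)))",
          unfolded real_norm_def])
      fix x assume x: "x \<in> {0..l}"
      have "\<bar>h x\<bar> \<le> B + 1" using B(2)[OF x] by simp
      moreover have "\<bar>h x - poly p (cos (pi * x / l))\<bar> \<le> \<delta>" using p x by (meson less_imp_le)
      ultimately show "\<bar>h x * (h x - poly p (cos (pi * x / l)))\<bar> \<le> (B + 1) * \<delta>"
        by (simp add: abs_mult mult_mono')
    qed (use l in \<open>auto intro!: integrable_continuous_interval continuous_intros h continuous_on_poly_comp\<close>)
    also have "\<dots> = e" using l B unfolding \<delta>_def by simp
    finally show ?thesis .
  qed
  then have "((\<lambda>x. h x * h x) has_integral 0) {0..l}"
    using integrable_integral[OF hh] field_le_epsilon[of "\<bar>integral {0..l} (\<lambda>x. h x * h x)\<bar>" 0]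
    by simp
  then have "h x * h x = 0"
    using has_integral_0_cbox_imp_0[of 0 l "\<lambda>x. h x * h x" x] x l
    by (auto simp: cbox_interval intro!: continuous_intros h)
  then show ?thesis by simp
qed

lemma neumann_C2_eq_if_cos_coeff_eq:
  assumes l: "l > 0" and u: "neumann_C2 l u" and v: "neumann_C2 l v"
    and coeff: "\<And>k. cos_coeff l u k = cos_coeff l v k"
  shows "u = v"
proof
  fix x
  have cont: "continuous_on {0..l} u" "continuous_on {0..l} v"
    using u v by (auto intro: neumann_C2_continuous)
  then have diff_cont: "continuous_on {0..l} (\<lambda>x. u x - v x)"
    by (intro continuous_intros)
  have "cos_coeff l (\<lambda>x. u x - v x) k = 0" for k
    using cos_coeff_lincomb[OF cont, of 1 "-1" k] coeff[of k] by simp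
  from integral_mult_poly_cos_eq_0[OF diff_cont this]
  have "x \<in> {0..l} \<Longrightarrow> u x - v x = 0"
    by (rule orthogonal_poly_cos_imp_zero[OF l diff_cont])
  then show "u x = v x" using u v unfolding neumann_C2_def by force
qed

definition cos_mode :: "real \<Rightarrow> nat \<Rightarrow> real \<Rightarrow> real" where
  "cos_mode l j x = (if x \<in> {0..l} then cos (real j * pi * x / l) else 0)"

lemma cos_mode_neumann_sol:
  assumes l: "l > 0" and a: "a + lam l j \<noteq> 0"
  shows "neumann_sol l a (\<lambda>x. c * cos_mode l j x) (\<lambda>x. c / (a + lam l j) * cos_mode l j x)"
proof -
  define m where "m = real j * pi / l"
  define d where "d = c / (a + lam l j)"
  have mx: "real j * pi * x / l = m * x" for x unfolding m_def by simp
  have derivs: "neumann_derivs l (\<lambda>x. d * cos_mode l j x)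
                  (\<lambda>x. - d * m * sin (m * x)) (\<lambda>x. - d * m^2 * cos (m * x))"
    unfolding neumann_derivs_def
  proof (intro conjI ballI)
    fix x assume x: "x \<in> {0..l}"
    have "((\<lambda>x. d * cos (m * x)) has_real_derivative - d * m * sin (m * x)) (at x within {0..l})"
      by (auto intro!: derivative_eq_intros)
    then show "((\<lambda>x. d * cos_mode l j x) has_real_derivative - d * m * sin (m * x)) (at x within {0..l})"
      by (rule has_field_derivative_transform_within[OF _ zero_less_one x]) (simp add: cos_mode_def mx)
    show "((\<lambda>x. - d * m * sin (m * x)) has_real_derivative - d * m^2 * cos (m * x)) (at x within {0..l})"
      by (auto intro!: derivative_eq_intros simp: power2_eq_square)
  next
    show "- d * m * sin (m * l) = 0" using l unfolding m_def by (simp add: sin_npi)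
  qed (auto intro!: continuous_intros)
  have cm: "cos_mode l j x = cos (m * x)" if "x \<in> {0..l}" for x
    using that by (simp add: cos_mode_def mx)
  have dm: "c = d * (a + m^2)" using a unfolding d_def lam_eq m_def by simp
  have "\<forall>x\<in>{0..l}. a * (d * cos_mode l j x) - - d * m^2 * cos (m * x) = c * cos_mode l j x"
    unfolding dm by (simp add: cm algebra_simps)
  moreover have "\<forall>x. x \<notin> {0..l} \<longrightarrow> d * cos_mode l j x = 0"
    by (simp add: cos_mode_def)
  ultimately show ?thesis
    using derivs unfolding neumann_sol_iff d_def by blast
qed

lemma cos_mode_neumann_C2:
  assumes "l > 0" shows "neumann_C2 l (\<lambda>x. c * cos_mode l j x)"
proof -
  have "1 + lam l j \<noteq> 0" using lam_nonneg[of l j] by linarith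
  from neumann_sol_imp_neumann_C2[OF cos_mode_neumann_sol[OF assms this, of "c * (1 + lam l j)"]] this
  show ?thesis by simp
qed

lemma neumann_inv_cos_mode:
  assumes "a > 0" "l > 0"
  shows "neumann_inv l a (\<lambda>x. c * cos_mode l j x) = (\<lambda>x. c / (a + lam l j) * cos_mode l j x)"
  using assms lam_nonneg[of l j]
  by (intro neumann_inv_eq cos_mode_neumann_sol) auto

lemma cos_coeff_cos_mode:
  assumes l: "l > 0"
  shows "cos_coeff l (cos_mode l j) k = (if k = j then (if j = 0 then l else l / 2) else 0)"
proof (cases "k = j")
  case True
  define m where "m = real j * pi / l"
  have "cos_coeff l (cos_mode l j) j = integral {0..l} (\<lambda>x. cos (m * x) * cos (m * x))"
    unfolding cos_coeff_def m_def by (rule integral_cong) (simp add: cos_mode_def)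
  also have "\<dots> = (if j = 0 then l else l / 2)"
  proof (cases "j = 0")
    case False
    then have m: "m > 0" using l unfolding m_def by simp
    define \<Phi> where "\<Phi> x = x / 2 + sin (2 * m * x) / (4 * m)" for x
    have "((\<lambda>x. cos (m * x) * cos (m * x)) has_integral (\<Phi> l - \<Phi> 0)) {0..l}"
    proof (rule fundamental_theorem_of_calculus)
      fix x assume "x \<in> {0..l}"
      have "(\<Phi> has_real_derivative 1/2 + cos (2 * m * x) * (2 * m) / (4 * m)) (at x within {0..l})"
        unfolding \<Phi>_def by (auto intro!: derivative_eq_intros)
      moreover have "1/2 + cos (2 * m * x) * (2 * m) / (4 * m) = cos (m * x) * cos (m * x)"
        using cos_double_cos[of "m * x"] m by (simp add: mult.assoc power2_eq_square field_simps)
      ultimately show "(\<Phi> has_vector_derivative cos (m * x) * cos (m * x)) (at x within {0..l})"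
        by (simp add: has_real_derivative_iff_has_vector_derivative)
    qed (use l in simp)
    moreover have "2 * m * l = real (2 * j) * pi"
      using l unfolding m_def by simp
    then have "sin (2 * m * l) = 0"
      by (simp only: sin_npi)
    ultimately show ?thesis using False by (simp add: \<Phi>_def integral_unique)
  qed (use l in \<open>simp add: m_def\<close>)
  finally show ?thesis using True by simp
next
  case False
  \<comment> \<open>Eigenfunctions of the Neumann Laplacian for distinct eigenvalues are orthogonal.\<close>
  have "1 + lam l j \<noteq> 0" using lam_nonneg[of l j] by linarith
  with cos_mode_neumann_sol[OF l this, of "1 + lam l j"]
  have "neumann_sol l 1 (\<lambda>x. (1 + lam l j) * cos_mode l j x) (cos_mode l j)"
    by simp
  from cos_coeff_neumann_sol[OF this l, of k]
  have "(lam l k - lam l j) * cos_coeff l (cos_mode l j) k = 0"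
    using cos_coeff_lincomb[of l "cos_mode l j" "cos_mode l j" "1 + lam l j" 0 k]
      neumann_C2_continuous[OF cos_mode_neumann_C2[OF l, of 1 j]]
    by (simp add: algebra_simps)
  then show ?thesis using False lam_inj[OF l, of k j] by auto
qed

lemma cos_coeff_scaled_cos_mode:
  "l > 0 \<Longrightarrow> cos_coeff l (\<lambda>x. t * cos_mode l j x) k = t * cos_coeff l (cos_mode l j) k"
  using cos_coeff_lincomb[of l "cos_mode l j" "cos_mode l j" t 0 k]
    neumann_C2_continuous[OF cos_mode_neumann_C2[of l 1 j]]
  by simp

lemma pscale_pair: "pscale t (u, v) = (\<lambda>x. t * u x, \<lambda>x. t * v x)"
  by (simp add: pscale_def)

lemma pscale_one: "pscale 1 w = w"
  by (simp add: pscale_def)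

lemma psub_eq_pzero_iff: "psub w w' = pzero \<longleftrightarrow> w = w'"
  by (auto simp: psub_def pzero_def fun_eq_iff prod_eq_iff)

lemma Xspace_psub: "w \<in> Xspace l \<Longrightarrow> w' \<in> Xspace l \<Longrightarrow> psub w w' \<in> Xspace l"
  using neumann_C2_lincomb[of l _ _ 1 "-1"] by (simp add: Xspace_def psub_def)

lemma gen_eigenspace_eq_kernel:
  fixes T :: "pairfun \<Rightarrow> pairfun" and X :: "pairfun set" and \<mu> :: real
  defines "N \<equiv> \<lambda>z. psub (pscale \<mu> z) (T z)"
  assumes invariant: "\<And>w. w \<in> X \<Longrightarrow> N w \<in> X" and zero: "N pzero = pzero"
    and no_chain: "\<And>w. w \<in> X \<Longrightarrow> N (N w) = pzero \<Longrightarrow> N w = pzero"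
  shows "gen_eigenspace X T \<mu> = {w \<in> X. N w = pzero}"
proof -
  have chain: "N w = pzero" if "w \<in> X" "(N ^^ k) w = pzero" for k w
    using that
  proof (induction k arbitrary: w)
    case 0
    then show ?case using zero by simp
  next
    case (Suc k)
    then have "N (N w) = pzero"
      using invariant by (simp add: funpow_Suc_right del: funpow.simps)
    then show ?case using no_chain Suc.prems(1) by blast
  qed
  show ?thesis
    unfolding gen_eigenspace_def N_def[symmetric]
    by (auto dest: chain intro: exI[of _ 1])
qed

section \<open>Operators built from two Neumann resolvents\<close>

definition coupled_resolvent_op ::
  "real \<Rightarrow> real \<Rightarrow> real \<Rightarrow> real \<Rightarrow> real \<Rightarrow> real \<Rightarrow> pairfun \<Rightarrow> pairfun" where
  "coupled_resolvent_op l a c \<alpha> \<beta> \<gamma> w =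
     (\<lambda>x. \<alpha> * neumann_inv l a (fst w) x + \<beta> * neumann_inv l a (snd w) x,
      \<lambda>x. \<gamma> * neumann_inv l c (fst w) x)"

text \<open>On the k-th cosine mode the operator acts as the matrix
  [[\<alpha>/(a + lam l k), \<beta>/(a + lam l k)], [\<gamma>/(c + lam l k), 0]], so 1 is an eigenvalue on that mode
  iff (a + lam l k - \<alpha>) (c + lam l k) = \<beta> \<gamma>, and then a simple one iff the trace of
  identity minus the matrix, which is proportional to 2 (a + lam l k) - \<alpha>, does not vanish.\<close>

locale coupled_resolvent =
  fixes l a c \<alpha> \<beta> \<gamma> :: real
  assumes l_pos: "l > 0" and a_pos: "a > 0" and c_pos: "c > 0"
begin

abbreviation M :: "pairfun \<Rightarrow> pairfun" where
  "M \<equiv> coupled_resolvent_op l a c \<alpha> \<beta> \<gamma>"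

definition mode :: "nat \<Rightarrow> pairfun" where
  "mode j = (cos_mode l j, \<lambda>x. \<gamma> / (c + lam l j) * cos_mode l j x)"

lemma lam_shift_pos: "a + lam l k > 0" "c + lam l k > 0"
  using a_pos c_pos lam_nonneg[of l k] by auto

lemma M_Xspace: "w \<in> Xspace l \<Longrightarrow> M w \<in> Xspace l"
  using a_pos c_pos l_pos
  by (auto simp: Xspace_def coupled_resolvent_op_def
      intro!: neumann_C2_lincomb neumann_C2_scale neumann_inv_C2)

lemma cos_coeff_M:
  assumes "w \<in> Xspace l"
  shows "(a + lam l k) * cos_coeff l (fst (M w)) k =
           \<alpha> * cos_coeff l (fst w) k + \<beta> * cos_coeff l (snd w) k"
    and "(c + lam l k) * cos_coeff l (snd (M w)) k = \<gamma> * cos_coeff l (fst w) k"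
proof -
  have cont: "continuous_on {0..l} (fst w)" "continuous_on {0..l} (snd w)"
    using assms by (auto simp: Xspace_def intro: neumann_C2_continuous)
  have sol: "neumann_sol l a (fst w) (neumann_inv l a (fst w))"
            "neumann_sol l a (snd w) (neumann_inv l a (snd w))"
            "neumann_sol l c (fst w) (neumann_inv l c (fst w))"
    using a_pos c_pos l_pos cont by (auto intro: neumann_inv_sol)
  have inv_cont: "continuous_on {0..l} (neumann_inv l a (fst w))"
    "continuous_on {0..l} (neumann_inv l a (snd w))" "continuous_on {0..l} (neumann_inv l c (fst w))"
    using sol by (auto intro: neumann_C2_continuous neumann_sol_imp_neumann_C2)
  show "(a + lam l k) * cos_coeff l (fst (M w)) k =
          \<alpha> * cos_coeff l (fst w) k + \<beta> * cos_coeff l (snd w) k"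
    using cos_coeff_neumann_sol[OF sol(1) l_pos, of k] cos_coeff_neumann_sol[OF sol(2) l_pos, of k]
    by (simp add: coupled_resolvent_op_def cos_coeff_lincomb[OF inv_cont(1,2)] algebra_simps)
  show "(c + lam l k) * cos_coeff l (snd (M w)) k = \<gamma> * cos_coeff l (fst w) k"
    using cos_coeff_neumann_sol[OF sol(3) l_pos, of k]
      cos_coeff_lincomb[OF inv_cont(3,3), of \<gamma> 0 k]
    by (simp add: coupled_resolvent_op_def algebra_simps)
qed

lemma pscale_mode:
  "pscale t (mode j) = (\<lambda>x. t * cos_mode l j x, \<lambda>x. (t * \<gamma> / (c + lam l j)) * cos_mode l j x)"
  by (simp add: mode_def pscale_pair fun_eq_iff)

lemma mode_Xspace: "pscale t (mode j) \<in> Xspace l"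
  unfolding pscale_mode Xspace_def mem_Collect_eq fst_conv snd_conv
  by (intro conjI cos_mode_neumann_C2 l_pos)

lemma mode_neq_pzero: "mode j \<noteq> pzero"
proof
  assume "mode j = pzero"
  then have "fst (mode j) 0 = 0" by (simp add: pzero_def)
  then show False using l_pos by (simp add: mode_def cos_mode_def)
qed

lemma pzero_eq_mode: "pzero = pscale 0 (mode j)"
  by (simp add: pscale_mode pzero_def)

lemma M_mode:
  assumes det: "(a + lam l j - \<alpha>) * (c + lam l j) = \<beta> * \<gamma>"
  shows "M (pscale t (mode j)) = pscale t (mode j)"
proof -
  define p q where "p = a + lam l j" and "q = c + lam l j"
  have pq: "p > 0" "q > 0" using lam_shift_pos[of j] by (simp_all add: p_def q_def)
  have "\<alpha> * (t / p) + \<beta> * (t * \<gamma> / q / p) = t * (\<alpha> * q + \<beta> * \<gamma>) / (p * q)"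
    using pq by (simp add: field_simps)
  also have "\<alpha> * q + \<beta> * \<gamma> = p * q"
    using det by (simp add: p_def q_def algebra_simps)
  finally have coeff: "\<alpha> * (t / p) + \<beta> * (t * \<gamma> / q / p) = t"
    using pq by simp
  have "\<alpha> * (t / p * y) + \<beta> * (t * \<gamma> / q / p * y) = (\<alpha> * (t / p) + \<beta> * (t * \<gamma> / q / p)) * y"
    for y by (simp only: distrib_right mult.assoc)
  then have "\<alpha> * (t / p * y) + \<beta> * (t * \<gamma> / q / p * y) = t * y" for y
    by (simp only: coeff)
  then show ?thesis
    unfolding pscale_mode coupled_resolvent_op_def fst_conv snd_conv
      neumann_inv_cos_mode[OF a_pos l_pos] neumann_inv_cos_mode[OF c_pos l_pos]
    by (simp add: p_def q_def fun_eq_iff mult.assoc mult.left_commute[of \<gamma> t])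
qed

lemma fixed_point_in_mode_span:
  assumes w: "w \<in> Xspace l" "M w = w"
    and det: "\<And>k. k \<noteq> j \<Longrightarrow> (a + lam l k - \<alpha>) * (c + lam l k) \<noteq> \<beta> * \<gamma>"
  shows "w \<in> range (\<lambda>t. pscale t (mode j))"
proof -
  obtain u v where uv: "w = (u, v)" by fastforce
  have C2: "neumann_C2 l u" "neumann_C2 l v" using w(1) uv by (auto simp: Xspace_def)
  have eq_u: "(a + lam l k) * cos_coeff l u k = \<alpha> * cos_coeff l u k + \<beta> * cos_coeff l v k"
    and eq_v: "(c + lam l k) * cos_coeff l v k = \<gamma> * cos_coeff l u k" for k
    using cos_coeff_M[OF w(1), of k] w(2) uv by simp_all
  have off_mode: "cos_coeff l u k = 0 \<and> cos_coeff l v k = 0" if "k \<noteq> j" for k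
  proof -
    have "((a + lam l k - \<alpha>) * (c + lam l k) - \<beta> * \<gamma>) * cos_coeff l u k = 0"
      using eq_u[of k] eq_v[of k] by algebra
    then have "cos_coeff l u k = 0" using det[OF that] by simp
    then show ?thesis using eq_v[of k] lam_shift_pos(2)[of k] by simp
  qed
  define n where "n = cos_coeff l (cos_mode l j) j"
  have n: "n \<noteq> 0" using l_pos by (simp add: n_def cos_coeff_cos_mode)
  define t where "t = cos_coeff l u j / n"
  have "cos_coeff l v j = \<gamma> * cos_coeff l u j / (c + lam l j)"
    using eq_v[of j] lam_shift_pos(2)[of j] by (simp add: field_simps)
  then have v_j: "cos_coeff l v j = t * \<gamma> / (c + lam l j) * n"
    using n by (simp add: t_def)
  have other_modes: "cos_coeff l (cos_mode l j) k = 0" if "k \<noteq> j" for k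
    using that cos_coeff_cos_mode[OF l_pos] by simp
  have coeffs: "cos_coeff l u k = cos_coeff l (\<lambda>x. t * cos_mode l j x) k"
               "cos_coeff l v k = cos_coeff l (\<lambda>x. (t * \<gamma> / (c + lam l j)) * cos_mode l j x) k" for k
    unfolding cos_coeff_scaled_cos_mode[OF l_pos]
    using off_mode[of k] other_modes[of k] v_j n
    by (cases "k = j"; simp add: t_def n_def[symmetric])+
  have "u = (\<lambda>x. t * cos_mode l j x)" "v = (\<lambda>x. (t * \<gamma> / (c + lam l j)) * cos_mode l j x)"
    using neumann_C2_eq_if_cos_coeff_eq[OF l_pos C2(1) cos_mode_neumann_C2[OF l_pos] coeffs(1)]
      neumann_C2_eq_if_cos_coeff_eq[OF l_pos C2(2) cos_mode_neumann_C2[OF l_pos] coeffs(2)]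
    by auto
  then show ?thesis using uv pscale_mode by auto
qed

lemma mode_not_in_range_id_minus_M:
  assumes w: "w \<in> Xspace l" and det: "(a + lam l j - \<alpha>) * (c + lam l j) = \<beta> * \<gamma>"
    and trace: "2 * (a + lam l j) \<noteq> \<alpha>"
    and image: "psub w (M w) = pscale b (mode j)"
  shows "b = 0"
proof -
  define n where "n = cos_coeff l (cos_mode l j) j"
  have n: "n \<noteq> 0" using l_pos by (simp add: n_def cos_coeff_cos_mode)
  define U where "U = cos_coeff l (fst w) j"
  define V where "V = cos_coeff l (snd w) j"
  define P where "P = cos_coeff l (fst (M w)) j"
  define Q where "Q = cos_coeff l (snd (M w)) j"
  have cont: "continuous_on {0..l} (fst w)" "continuous_on {0..l} (snd w)"
    "continuous_on {0..l} (fst (M w))" "continuous_on {0..l} (snd (M w))"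
    using w M_Xspace[OF w] by (auto simp: Xspace_def intro: neumann_C2_continuous)
  define p q where "p = a + lam l j" and "q = c + lam l j"
  have q: "q > 0" using lam_shift_pos[of j] by (simp add: q_def)
  have parts: "(\<lambda>x. fst w x - fst (M w) x) = (\<lambda>x. b * cos_mode l j x)"
    "(\<lambda>x. snd w x - snd (M w) x) = (\<lambda>x. (b * \<gamma> / q) * cos_mode l j x)"
    using image unfolding pscale_mode psub_def q_def by simp_all
  have "cos_coeff l (\<lambda>x. fst w x - fst (M w) x) j = b * n"
       "cos_coeff l (\<lambda>x. snd w x - snd (M w) x) j = b * \<gamma> / q * n"
    unfolding parts cos_coeff_scaled_cos_mode[OF l_pos] n_def by simp_all
  then have e1: "U - P = b * n" and e2: "V - Q = b * \<gamma> / q * n"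
    using cos_coeff_lincomb[OF cont(1,3), of 1 "-1" j] cos_coeff_lincomb[OF cont(2,4), of 1 "-1" j]
    by (simp_all add: U_def V_def P_def Q_def)
  have e3: "p * P = \<alpha> * U + \<beta> * V" and e4: "q * Q = \<gamma> * U"
    using cos_coeff_M[OF w, of j] by (simp_all add: U_def V_def P_def Q_def p_def q_def)
  have v: "q * V = \<gamma> * U + b * \<gamma> * n"
    using e2 e4 q by (simp add: field_simps)
  have u: "(p - \<alpha>) * U - p * b * n = \<beta> * V"
    using e1 e3 by (simp add: algebra_simps)
  have "(p - \<alpha>) * q = \<beta> * \<gamma>" using det by (simp add: p_def q_def)
  with u v have "q * b * n * (2 * p - \<alpha>) = 0"
    by algebra
  then show ?thesis using n trace q by (simp add: p_def)
qed

lemma fixed_points_eq_mode_span: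
  assumes det: "\<And>k. (a + lam l k - \<alpha>) * (c + lam l k) = \<beta> * \<gamma> \<longleftrightarrow> k = j"
  shows "{w \<in> Xspace l. M w = w} = range (\<lambda>t. pscale t (mode j))"
proof
  show "{w \<in> Xspace l. M w = w} \<subseteq> range (\<lambda>t. pscale t (mode j))"
    using fixed_point_in_mode_span[of _ j] det by blast
  show "range (\<lambda>t. pscale t (mode j)) \<subseteq> {w \<in> Xspace l. M w = w}"
    using M_mode[of j] det[of j] mode_Xspace by blast
qed

theorem eigenvalue_one_alg_mult_one:
  assumes det: "\<And>k. (a + lam l k - \<alpha>) * (c + lam l k) = \<beta> * \<gamma> \<longleftrightarrow> k = j"
    and trace: "2 * (a + lam l j) \<noteq> \<alpha>"
  shows "eigenvalue_alg_mult_one (Xspace l) M 1"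
proof -
  have det_j: "(a + lam l j - \<alpha>) * (c + lam l j) = \<beta> * \<gamma>"
    using det by simp
  note fixed_points = fixed_points_eq_mode_span[OF det]
  define N where "N = (\<lambda>z. psub (pscale 1 z) (M z))"
  have N_zero_iff: "N w = pzero \<longleftrightarrow> M w = w" for w
    by (auto simp: N_def pscale_one psub_eq_pzero_iff)
  have N_Xspace: "N w \<in> Xspace l" if "w \<in> Xspace l" for w
    using that by (simp add: N_def pscale_one Xspace_psub M_Xspace)
  have no_chain: "N w = pzero" if w: "w \<in> Xspace l" and NN: "N (N w) = pzero" for w
  proof -
    have "N w \<in> range (\<lambda>t. pscale t (mode j))"
      using fixed_points N_Xspace[OF w] NN unfolding N_zero_iff by blast
    then obtain b where b: "N w = pscale b (mode j)" by blast
    then have "psub w (M w) = pscale b (mode j)" by (simp add: N_def pscale_one)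
    then have "b = 0" by (rule mode_not_in_range_id_minus_M[OF w det_j trace])
    then show ?thesis using b pzero_eq_mode[of j] by simp
  qed
  have N_pzero: "N pzero = pzero"
    unfolding N_zero_iff unfolding pzero_eq_mode[of j] by (rule M_mode[OF det_j])
  have "gen_eigenspace (Xspace l) M 1 = {w \<in> Xspace l. N w = pzero}"
    unfolding N_def
    by (rule gen_eigenspace_eq_kernel[OF N_Xspace[unfolded N_def] N_pzero[unfolded N_def]
          no_chain[unfolded N_def]])
  also have "\<dots> = range (\<lambda>t. pscale t (mode j))"
    using fixed_points by (simp add: N_zero_iff)
  finally have "gen_eigenspace (Xspace l) M 1 = range (\<lambda>t. pscale t (mode j))" .
  moreover have "mode j \<in> Xspace l" "M (mode j) = pscale 1 (mode j)"
    using mode_Xspace[of 1 j] M_mode[OF det_j, of 1] by (simp_all add: pscale_one)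
  ultimately show ?thesis
    unfolding eigenvalue_alg_mult_one_def using mode_neq_pzero[of j] by blast
qed

end

section \<open>The operator of the steady-state problem\<close>

lemma r_lt_neg_r'_if_sig_pos:
  assumes "D > 0" "r 1 > 0" "sig r r' D l j > 0"
  shows "r 1 < - r' 1"
proof -
  define E where "E = 1 + D * lam l j"
  have E: "E \<ge> 1" using assms(1) lam_nonneg[of l j] by (simp add: E_def)
  have "lam l j \<noteq> 0" using assms(3) by (auto simp: sig_def)
  then have "- (r' 1 / E + r 1) > 0"
    using assms(3) lam_nonneg[of l j] by (simp add: sig_def E_def zero_less_mult_iff)
  then have "- r' 1 > r 1 * E" using E by (simp add: field_simps)
  moreover have "r 1 * E \<ge> r 1" using E assms(2) by simp
  ultimately show ?thesis by linarith
qed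

lemma sig_c_le:
  assumes "D > 0" "r 1 > 0" "r 1 \<le> - r' 1"
  shows "sig_c r r' D \<le> - r' 1 / D"
proof -
  have "0 \<le> sqrt (- r' 1) - sqrt (r 1)" "sqrt (- r' 1) - sqrt (r 1) \<le> sqrt (- r' 1)"
    using assms(2,3) by auto
  from power_mono[OF this(2,1), of 2]
  have "(sqrt (- r' 1) - sqrt (r 1))^2 \<le> - r' 1" using assms(2,3) by simp
  from divide_right_mono[OF this less_imp_le[OF assms(1)]]
  show ?thesis by (simp add: sig_c_def)
qed

lemma f0_pos:
  assumes "D > 0" "r 1 > 0" "r 1 \<le> - r' 1" "\<sigma> < sig_c r r' D"
  shows "f0 r r' D \<sigma> > 0"
proof -
  have "0 < (- r' 1 / D - \<sigma>) / r 1"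
    using sig_c_le[where r = r and r' = r', OF assms(1-3)] assms(2,4) by simp
  also have "\<dots> = f0 r r' D \<sigma>"
    using assms(1,2) by (simp add: f0_def field_simps)
  finally show ?thesis .
qed

lemma Mop_eq_coupled_resolvent_op:
  "Mop r r' D l \<sigma> =
     coupled_resolvent_op l (f0 r r' D \<sigma>) (1 / D) (2 * f0 r r' D \<sigma>) (f1 r r' D) (1 / D)"
  by (simp add: fun_eq_iff Mop_def coupled_resolvent_op_def g0_def g1_def Let_def)

lemma sig_det_identity:
  fixes R D L s p :: real
  assumes R: "R \<noteq> 0" and D: "D \<noteq> 0" and K: "1 + D * L \<noteq> 0"
  shows "(L - (- p / (D * R) - s / R)) * (1 / D + L) - p / (D * R) * (1 / D) =
         (1 + D * L) / (D * R) * (s - (- (p / (1 + D * L) + R) * L))"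
proof -
  define K where "K = 1 + D * L"
  have K: "K \<noteq> 0" using K by (simp add: K_def)
  have "L - (- p / (D * R) - s / R) - p / (D * R) / K - (s + (p / K + R) * L) / R
        = p * (K - 1 - D * L) / (D * R * K)"
    using R D K by (simp add: field_simps)
  then have key: "L - (- p / (D * R) - s / R) - p / (D * R) / K = (s + (p / K + R) * L) / R"
    by (simp add: K_def)
  have "1 / D + L = K / D" using D by (simp add: K_def field_simps)
  moreover have "X * (K / D) - Y * (1 / D) = K / D * (X - Y / K)" for X Y
    using K D by (simp add: field_simps)
  ultimately have "(L - (- p / (D * R) - s / R)) * (1 / D + L) - p / (D * R) * (1 / D) =
        K / D * (L - (- p / (D * R) - s / R) - p / (D * R) / K)"
    by presburger
  also have "\<dots> = K / (D * R) * (s + (p / K + R) * L)"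
    unfolding key by simp
  finally show ?thesis by (simp add: K_def) (simp add: algebra_simps)
qed

lemma mode_det_eq_sig_diff:
  assumes D: "D > 0" and r: "r 1 > 0"
  shows "(f0 r r' D \<sigma> + lam l k - 2 * f0 r r' D \<sigma>) * (1 / D + lam l k) - f1 r r' D * (1 / D) =
         (1 + D * lam l k) / (D * r 1) * (\<sigma> - sig r r' D l k)"
proof -
  have "0 \<le> D * lam l k" using D lam_nonneg[of l k] by simp
  then have K: "1 + D * lam l k \<noteq> 0" by linarith
  have "f0 r r' D \<sigma> + lam l k - 2 * f0 r r' D \<sigma> = lam l k - f0 r r' D \<sigma>" by simp
  then show ?thesis
    unfolding f0_def f1_def sig_def
    by (simp only:) (rule sig_det_identity, use D r K in simp_all)
qed

lemma mode_det_eq_0_iff: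
  assumes D: "D > 0" and r: "r 1 > 0"
    and simple: "\<forall>k. k \<noteq> j \<longrightarrow> sig r r' D l j \<noteq> sig r r' D l k"
  defines "\<sigma> \<equiv> sig r r' D l j"
  shows "(f0 r r' D \<sigma> + lam l k - 2 * f0 r r' D \<sigma>) * (1 / D + lam l k) = f1 r r' D * (1 / D)
           \<longleftrightarrow> k = j"
proof -
  have "0 \<le> D * lam l k" using D lam_nonneg[of l k] by simp
  then have "1 + D * lam l k \<noteq> 0" by linarith
  then have factor: "(1 + D * lam l k) / (D * r 1) \<noteq> 0" using D r by simp
  have "\<sigma> = sig r r' D l k \<longleftrightarrow> k = j" using simple by (auto simp: \<sigma>_def)
  with factor show ?thesis
    using mode_det_eq_sig_diff[where r = r and r' = r' and l = l and k = k and \<sigma> = \<sigma>, OF D r]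
    by (smt (verit) mult_eq_0_iff)
qed

theorem lemma2p2:
  fixes l D :: real and r r' r'' :: "real \<Rightarrow> real" and j :: nat
  assumes l_pos: "l > 0" and D_pos: "D > 0"
    and r_C2: "\<forall>v\<in>{0..}. (r has_real_derivative r' v) (at v within {0..}) \<and>
                          (r' has_real_derivative r'' v) (at v within {0..})"
    and r''_cont: "continuous_on {0..} r''"
    and r_pos: "\<forall>v\<in>{0..}. r v > 0"
    and r'_neg: "\<forall>v\<in>{0..}. r' v < 0"
    and r_lim: "(r \<longlongrightarrow> 0) at_top"
    and ic: "\<exists>ic::nat. ic \<ge> 1 \<and> (\<forall>i. 1 \<le> i \<and> i \<le> ic \<longrightarrow> sig r r' D l i > 0)
                               \<and> (\<forall>i. i > ic \<longrightarrow> sig r r' D l i \<le> 0)"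
    and j_pos: "j \<ge> 1"
    and j_lam: "lam l j < - (r' 1 + r 1) / (D * r 1)"
    and j_simple: "\<forall>k::nat. k \<noteq> j \<longrightarrow> sig r r' D l j \<noteq> sig r r' D l k"
    and j_range: "0 < sig r r' D l j \<and> sig r r' D l j < sig_c r r' D"
  shows "eigenvalue_alg_mult_one (Xspace l) (Mop r r' D l (sig r r' D l j)) 1"
proof -
  define \<sigma> where "\<sigma> = sig r r' D l j"
  have r1: "r 1 > 0" using r_pos by simp
  have "r 1 < - r' 1"
    using r_lt_neg_r'_if_sig_pos[where r = r and r' = r' and l = l and j = j, OF D_pos r1] j_range
    by simp
  then have f0: "f0 r r' D \<sigma> > 0"
    using f0_pos[where r = r and r' = r', OF D_pos r1] j_range by (simp add: \<sigma>_def)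
  interpret coupled_resolvent l "f0 r r' D \<sigma>" "1 / D" "2 * f0 r r' D \<sigma>" "f1 r r' D" "1 / D"
    using l_pos f0 D_pos by unfold_locales simp_all
  have "(f0 r r' D \<sigma> + lam l k - 2 * f0 r r' D \<sigma>) * (1 / D + lam l k) = f1 r r' D * (1 / D)
          \<longleftrightarrow> k = j" for k
    unfolding \<sigma>_def by (rule mode_det_eq_0_iff[OF D_pos r1 j_simple])
  moreover have "2 * (f0 r r' D \<sigma> + lam l j) \<noteq> 2 * f0 r r' D \<sigma>"
    using lam_pos[OF l_pos j_pos] by simp
  ultimately show ?thesis
    unfolding Mop_eq_coupled_resolvent_op \<sigma>_def[symmetric]
    by (rule eigenvalue_one_alg_mult_one)
qed

end
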